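(* Let $n \ge k \ge 1$ be integers, let $s \in (0,1)$, $q = 1-s$ and $r = q/s$. Let $S$ be the (finite) set of states defined in the context, and let $P = (p_{xy})_{x,y \in S}$ be the transition matrix $$p_{xy} = r^{\,b(y)}\,\frac{s^k}{1-q^k}\,q^{\,\phi(|y|-|x|)} .$$ Define weights $\omega_x = r^{\,b(x)}$ for $x \in S$ and the probability vector $\nu_x = \omega_x / \sum_{z \in S} \omega_z$. Then $\nu$ is a stationary distribution of $P$, i.e. $\nu_y = \sum_{x \in S} \nu_x p_{xy}$ for every $y \in S$; moreover it is the unique stationary distribution.
   Context: Model: $k$ workers move in one direction around a closed loop of $n$ bins, never passing one another and never occupying the same bin. In each time step each worker moves bin by bin, performing at each bin an independent Bernoulli trial with success probability $s$, until it either has a success (and stops to collect a part) or is blocked by the worker directly ahead, who has stopped (it then ends one bin behind that worker without a success). States record the forward distances between consecutive workers and which workers were blocked. Formal definitions. Let $1^*$ be a formal symbol and set $|1^*| := 1$ and $|m| := m$ for positive integers $m$. The state space $S$ is the set of $k$-tuples $x = (x_1,\dots,x_k)$ with each $x_i \in \{1^*, 1, 2, \dots, n-k+1\}$, such that $\sum_{i=1}^k |x_i| = n$ and at most $k-1$ entries equal $1^*$. ($x_i$ is the distance from worker $i$ forward to worker $i+1$, indices mod $k$; $x_i = 1^*$ means worker $i$ is blocked.) For $x \in S$, $b(x)$ denotes the number of entries equal to $1^*$, and $|x| := (|x_1|,\dots,|x_k|) \in \mathbb{Z}^k$. For $\Delta = (d_1,\dots,d_k) \in \mathbb{Z}^k$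 with $\sum_i d_i = 0$, put $\gamma_j = \sum_{i=1}^j d_i$ for $j=1,\dots,k$, and $\phi(\Delta) = \sum_{j=1}^k \bigl(\gamma_j - \min_{1 \le i \le k} \gamma_i\bigr)$. ($\phi(\Delta)$ is the total number of Bernoulli failures needed to change the spacing by $\Delta$ when at least one worker moves zero bins after the common advance.) The matrix $P$ is the transition matrix of the warehouse process on $S$. *)

theory Defs
  imports Complex_Main
begin

text \<open>An entry of a state: either the formal symbol 1* (Star) or a positive integer m (Gap m).\<close>
datatype gap = Star | Gap nat

fun gabs :: "gap \<Rightarrow> nat" where
  "gabs Star = 1"
| "gabs (Gap m) = m"

text \<open>State space S: k-tuples (lists of length k), indices 0..k-1 standing for workers 1..k.\<close>
definition states :: "nat \<Rightarrow> nat \<Rightarrow> gap list set" where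
  "states n k = {x. length x = k
     \<and> (\<forall>e \<in> set x. e = Star \<or> (\<exists>m. e = Gap m \<and> 1 \<le> m \<and> m \<le> n - k + 1))
     \<and> sum_list (map gabs x) = n
     \<and> length (filter (\<lambda>e. e = Star) x) \<le> k - 1}"

definition blocked :: "gap list \<Rightarrow> nat" where
  "blocked x = length (filter (\<lambda>e. e = Star) x)"

definition absv :: "gap list \<Rightarrow> int list" where
  "absv x = map (\<lambda>e. int (gabs e)) x"

definition gam :: "int list \<Rightarrow> nat \<Rightarrow> int" where
  "gam d j = sum_list (take j d)"

definition phi :: "int list \<Rightarrow> int" where
  "phi d = (\<Sum>j = 1..length d. gam d j - Min {gam d i | i. 1 \<le> i \<and> i \<le> length d})"

definition trans_prob :: "nat \<Rightarrow> real \<Rightarrow> gap list \<Rightarrow> gap list \<Rightarrow> real" where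
  "trans_prob k s x y =
     ((1 - s) / s) ^ blocked y * (s ^ k / (1 - (1 - s) ^ k))
       * (1 - s) ^ nat (phi (map2 (-) (absv y) (absv x)))"

definition weight :: "real \<Rightarrow> gap list \<Rightarrow> real" where
  "weight s x = ((1 - s) / s) ^ blocked x"

definition nu :: "nat \<Rightarrow> nat \<Rightarrow> real \<Rightarrow> gap list \<Rightarrow> real" where
  "nu n k s x = weight s x / (\<Sum>z \<in> states n k. weight s z)"

end

theory Submission
  imports Defs "HOL-Library.FuncSet"
begin

(* Fix the target state y and write c j for its gaps.  For a source state x the shifted
   partial sums  fails x j = gamma_(j+1) - min gamma  of  Delta = |y| - |x|  are nonnegative,
   vanish somewhere, sum to phi(Delta) and satisfy  fails x j - fails x (j-1) = c j - |x_j|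
   cyclically.  Give each worker an independent failure count G j, geometric with parameter s
   and truncated at N.  The outcomes in which some worker fails zero times have probability
   1 - q^k, and each of them belongs to exactly one source x: fails x is the unique solution of
   m j = min (G j) (m (j-1) + c j - 1), and worker j is blocked in x iff m j < G j.  The
   outcomes belonging to x have probability s^k r^b(x) q^phi(Delta), so summing over x gives
   sum_x r^b(x) p_xy = r^b(y).  Uniqueness holds because every p_xy is positive. *)

section \<open>Cyclic recurrences\<close>

definition cyc_pred :: "nat \<Rightarrow> nat \<Rightarrow> nat" where
  "cyc_pred k j = (if j = 0 then k - 1 else j - 1)"

lemma cyc_pred_less: "j < k \<Longrightarrow> cyc_pred k j < k"
  unfolding cyc_pred_def by auto

lemma cyc_pred_closed_downwards:
  assumes closed: "\<And>j. j < k \<Longrightarrow> j \<in> Z \<Longrightarrow> cyc_pred k j \<in> Z"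
    and "j \<in> Z" "j < k" "i \<le> j"
  shows "i \<in> Z"
  using assms(2-4)
proof (induction j)
  case (Suc j)
  then have "j \<in> Z" using closed[of "Suc j"] by (simp add: cyc_pred_def)
  with Suc show ?case by (cases "i = Suc j") auto
qed simp

lemma cyc_pred_closed_imp_all:
  assumes closed: "\<And>j. j < k \<Longrightarrow> j \<in> Z \<Longrightarrow> cyc_pred k j \<in> Z"
    and "j0 \<in> Z" "j0 < k" "i < k"
  shows "i \<in> Z"
proof -
  have "0 \<in> Z" using cyc_pred_closed_downwards[OF closed assms(2,3)] by simp
  then have "k - 1 \<in> Z" using closed[of 0] assms(3) by (simp add: cyc_pred_def)
  then show ?thesis using cyc_pred_closed_downwards[OF closed, of "k - 1" i] assms(4) by simp
qed

lemma cyc_pred_invariant_const: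
  assumes "\<And>j. j < k \<Longrightarrow> f (cyc_pred k j) = f j" "i < k" "j < k"
  shows "f i = f j"
  using cyc_pred_closed_imp_all[of k "{i. f i = f j}" j i] assms by auto

lemma sum_cyc_pred: "(\<Sum>j<k. g (cyc_pred k j)) = (\<Sum>j<k. g j)"
proof -
  have inj: "inj_on (cyc_pred k) {..<k}"
    unfolding inj_on_def cyc_pred_def by auto
  then have "cyc_pred k ` {..<k} = {..<k}"
    by (intro endo_inj_surj) (auto simp: cyc_pred_less)
  then show ?thesis using sum.reindex[OF inj, of g] by simp
qed

definition cyclic_min_eq :: "nat \<Rightarrow> (nat \<Rightarrow> nat) \<Rightarrow> (nat \<Rightarrow> nat) \<Rightarrow> (nat \<Rightarrow> nat) \<Rightarrow> bool" where
  "cyclic_min_eq k a G m \<longleftrightarrow> (\<forall>j<k. m j = min (G j) (m (cyc_pred k j) + a j))"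

lemma cyclic_min_eqD:
  "cyclic_min_eq k a G m \<Longrightarrow> j < k \<Longrightarrow> m j = min (G j) (m (cyc_pred k j) + a j)"
  unfolding cyclic_min_eq_def by blast

lemma cyclic_min_eq_le_unique:
  assumes m: "cyclic_min_eq k a G m" and m': "cyclic_min_eq k a G m'"
    and "j0 < k" "G j0 = 0" "j < k"
  shows "m j \<le> m' j"
proof (rule ccontr)
  assume "\<not> m j \<le> m' j"
  define f where "f i = int (m i) - int (m' i)" for i
  define D where "D = Max (f ` {..<k})"
  have D_ge: "f i \<le> D" if "i < k" for i
    unfolding D_def using that by (intro Max_ge) auto
  obtain jD where jD: "jD < k" "f jD = D"
    using Max_in[of "f ` {..<k}"] \<open>j < k\<close> unfolding D_def by fastforce
  have "0 < D" using D_ge[OF \<open>j < k\<close>] \<open>\<not> m j \<le> m' j\<close> unfolding f_def by simp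
  \<comment> \<open>where \<open>m - m'\<close> is maximal and positive, \<open>m'\<close> is not capped by \<open>G\<close>, so the
      maximum is also attained at the cyclic predecessor\<close>
  have "f (cyc_pred k i) = D" if "i < k" "f i = D" for i
  proof -
    have "m' i < m i" using that \<open>0 < D\<close> unfolding f_def by simp
    then have "m' i = m' (cyc_pred k i) + a i" "m i \<le> m (cyc_pred k i) + a i"
      using cyclic_min_eqD[OF m \<open>i < k\<close>] cyclic_min_eqD[OF m' \<open>i < k\<close>] by auto
    then show ?thesis
      using that D_ge[OF cyc_pred_less[OF \<open>i < k\<close>]] unfolding f_def by linarith
  qed
  then have "f j0 = D"
    using cyc_pred_closed_imp_all[of k "{i. f i = D}" jD j0] jD \<open>j0 < k\<close> by auto
  moreover have "m j0 = 0" using cyclic_min_eqD[OF m \<open>j0 < k\<close>] \<open>G j0 = 0\<close> by simp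
  ultimately show False using \<open>0 < D\<close> unfolding f_def by simp
qed

lemma cyclic_min_eq_unique:
  assumes "cyclic_min_eq k a G m" "cyclic_min_eq k a G m'" "j0 < k" "G j0 = 0" "j < k"
  shows "m j = m' j"
  using cyclic_min_eq_le_unique[OF assms(1-5)] cyclic_min_eq_le_unique[OF assms(2,1,3-5)]
  by simp

text \<open>Among the \<open>m \<le> G\<close> with \<open>m j \<le> m (cyc_pred k j) + a j\<close>, one with the largest sum is a
  solution: at an entry where the equation fails, \<open>m\<close> could be increased.\<close>
lemma cyclic_min_eq_exists: "\<exists>m. cyclic_min_eq k a G m"
proof -
  define P where
    "P m \<longleftrightarrow> (\<forall>j<k. m j \<le> G j \<and> m j \<le> m (cyc_pred k j) + a j)" for m :: "nat \<Rightarrow> nat"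
  have "P (\<lambda>_. 0)" unfolding P_def by simp
  moreover have "\<forall>m. P m \<longrightarrow> (\<Sum>j<k. m j) < Suc (\<Sum>j<k. G j)"
    unfolding P_def by (auto intro!: le_imp_less_Suc sum_mono)
  ultimately obtain m where Pm: "P m" and greatest: "\<And>m'. P m' \<Longrightarrow> (\<Sum>j<k. m' j) \<le> (\<Sum>j<k. m j)"
    using ex_has_greatest_nat[of P "\<lambda>_. 0" "\<lambda>m. \<Sum>j<k. m j"] by blast
  have "m j = min (G j) (m (cyc_pred k j) + a j)" if "j < k" for j
  proof (rule ccontr)
    assume "m j \<noteq> min (G j) (m (cyc_pred k j) + a j)"
    then have less: "m j < G j" "m j < m (cyc_pred k j) + a j"
      using Pm \<open>j < k\<close> unfolding P_def by auto
    define m' where "m' = m(j := Suc (m j))"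
    have "P m'"
      unfolding P_def
    proof (intro allI impI)
      fix i assume "i < k"
      have "m (cyc_pred k i) \<le> m' (cyc_pred k i)" unfolding m'_def by simp
      then show "m' i \<le> G i \<and> m' i \<le> m' (cyc_pred k i) + a i"
        using less Pm \<open>i < k\<close> unfolding P_def m'_def by (cases "i = j") fastforce+
    qed
    moreover have "(\<Sum>i<k. m' i) = Suc (\<Sum>i<k. m i)"
      using \<open>j < k\<close> unfolding m'_def by (simp add: sum.remove sum_Suc)
    ultimately show False using greatest by fastforce
  qed
  then show ?thesis unfolding cyclic_min_eq_def by blast
qed

lemma cyclic_min_eq_zero_propagates:
  assumes "cyclic_min_eq k a G m" "j < k" "0 < G j" "m j = 0"
  shows "m (cyc_pred k j) = 0"
  using cyclic_min_eqD[OF assms(1,2)] assms(3,4) by simp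

section \<open>Truncated geometric failure counts\<close>

definition trunc_geom :: "real \<Rightarrow> nat \<Rightarrow> nat \<Rightarrow> real" where
  "trunc_geom s N g = (if g < N then s * (1 - s) ^ g else (1 - s) ^ N)"

lemma sum_trunc_geom_tail: "a \<le> N \<Longrightarrow> (\<Sum>g = a..N. trunc_geom s N g) = (1 - s) ^ a"
proof (induction "N - a" arbitrary: a)
  case (Suc d)
  then have "a < N" by simp
  then have "(\<Sum>g = a..N. trunc_geom s N g) = s * (1 - s) ^ a + (\<Sum>g = Suc a..N. trunc_geom s N g)"
    by (simp add: sum.atLeast_Suc_atMost trunc_geom_def)
  also have "\<dots> = s * (1 - s) ^ a + (1 - s) ^ Suc a"
    using Suc.hyps(1)[of "Suc a"] Suc.hyps(2) \<open>a < N\<close> by simp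
  finally show ?case by (simp add: algebra_simps)
qed (simp add: trunc_geom_def)

definition some_zero_vectors :: "nat \<Rightarrow> nat \<Rightarrow> (nat \<Rightarrow> nat) set" where
  "some_zero_vectors k N = {G \<in> {..<k} \<rightarrow>\<^sub>E {0..N}. \<exists>j<k. G j = 0}"

lemma some_zero_vectors_eq_diff:
  "some_zero_vectors k N = ({..<k} \<rightarrow>\<^sub>E {0..N}) - ({..<k} \<rightarrow>\<^sub>E {1..N})"
proof -
  have "G \<in> {..<k} \<rightarrow>\<^sub>E {1..N} \<longleftrightarrow> G \<in> {..<k} \<rightarrow>\<^sub>E {0..N} \<and> (\<forall>j<k. G j \<noteq> 0)" for G
    by (auto simp: PiE_iff Suc_le_eq)
  then show ?thesis unfolding some_zero_vectors_def set_diff_eq by (simp cong: conj_cong)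
qed

lemma sum_prod_some_zero_vectors:
  fixes f :: "nat \<Rightarrow> 'a::comm_ring_1"
  shows "(\<Sum>G\<in>some_zero_vectors k N. \<Prod>j<k. f (G j))
    = (\<Sum>g = 0..N. f g) ^ k - (\<Sum>g = 1..N. f g) ^ k"
proof -
  have sum_PiE: "(\<Sum>G\<in>{..<k} \<rightarrow>\<^sub>E A. \<Prod>j<k. f (G j)) = (\<Sum>g\<in>A. f g) ^ k" if "finite A" for A
    using prod_sum_PiE[of "{..<k}" "\<lambda>_. A" "\<lambda>_. f", symmetric] that by simp
  have "({..<k} \<rightarrow>\<^sub>E {1..N}) \<subseteq> ({..<k} \<rightarrow>\<^sub>E {0..N})" by (rule PiE_mono) auto
  then show ?thesis
    unfolding some_zero_vectors_eq_diff by (simp add: sum_diff finite_PiE sum_PiE)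
qed

lemma sum_trunc_geom_some_zero_vectors:
  assumes "1 \<le> N"
  shows "(\<Sum>G\<in>some_zero_vectors k N. \<Prod>j<k. trunc_geom s N (G j)) = 1 - (1 - s) ^ k"
  using sum_trunc_geom_tail[of 0 N s] sum_trunc_geom_tail[of 1 N s] assms
  by (simp add: sum_prod_some_zero_vectors)

section \<open>Uniqueness of stationary vectors\<close>

text \<open>Subtracting the largest multiple of \<open>\<nu>\<close> that stays below \<open>\<mu>\<close> leaves a nonnegative
  invariant vector with a zero entry; positivity of the kernel forces it to vanish.\<close>
lemma stationary_unique_of_positive_kernel:
  fixes P :: "'a \<Rightarrow> 'a \<Rightarrow> real"
  assumes fin: "finite S" and P_pos: "\<And>x y. x \<in> S \<Longrightarrow> y \<in> S \<Longrightarrow> 0 < P x y"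
    and \<nu>_pos: "\<And>x. x \<in> S \<Longrightarrow> 0 < \<nu> x" and \<nu>_sum: "(\<Sum>x\<in>S. \<nu> x) = 1"
    and \<nu>_stat: "\<And>y. y \<in> S \<Longrightarrow> \<nu> y = (\<Sum>x\<in>S. \<nu> x * P x y)"
    and \<mu>_stat: "\<And>y. y \<in> S \<Longrightarrow> \<mu> y = (\<Sum>x\<in>S. \<mu> x * P x y)" and \<mu>_sum: "(\<Sum>x\<in>S. \<mu> x) = 1"
    and "x \<in> S"
  shows "\<mu> x = \<nu> x"
proof -
  define t where "t = Min ((\<lambda>x. \<mu> x / \<nu> x) ` S)"
  obtain x0 where x0: "x0 \<in> S" "t = \<mu> x0 / \<nu> x0"
    using Min_in[of "(\<lambda>x. \<mu> x / \<nu> x) ` S"] fin \<open>x \<in> S\<close> unfolding t_def by blast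
  define w where "w x = \<mu> x - t * \<nu> x" for x
  have w_nonneg: "0 \<le> w x" if "x \<in> S" for x
    using Min_le[OF _ imageI[OF that], of "\<lambda>x. \<mu> x / \<nu> x"] fin \<nu>_pos[OF that]
    unfolding w_def t_def by (simp add: le_divide_eq)
  have "w x0 = 0" unfolding w_def using x0 \<nu>_pos[OF x0(1)] by simp
  moreover have "w x0 = (\<Sum>x\<in>S. w x * P x x0)"
    unfolding w_def using \<mu>_stat[OF x0(1)] \<nu>_stat[OF x0(1)]
    by (simp add: sum_distrib_left sum_subtractf algebra_simps)
  ultimately have "\<forall>x\<in>S. w x * P x x0 = 0"
    using sum_nonneg_eq_0_iff[OF fin, of "\<lambda>x. w x * P x x0"] w_nonneg P_pos[OF _ x0(1)]
    by (simp add: less_imp_le)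
  then have \<mu>_eq: "\<mu> x = t * \<nu> x" if "x \<in> S" for x
    using that P_pos[OF that x0(1)] unfolding w_def by fastforce
  then have "t = 1"
    using \<mu>_sum \<nu>_sum by (simp add: sum_distrib_left[symmetric])
  then show ?thesis using \<mu>_eq[OF \<open>x \<in> S\<close>] by simp
qed

lemma states_memD:
  assumes "x \<in> states n k"
  shows states_length: "length x = k"
    and states_gabs_ge1: "j < k \<Longrightarrow> 1 \<le> gabs (x ! j)"
    and states_sum_gabs: "(\<Sum>j<k. gabs (x ! j)) = n"
    and states_blocked_le: "blocked x \<le> k - 1"
proof -
  show len: "length x = k" using assms unfolding states_def by simp
  show "1 \<le> gabs (x ! j)" if "j < k"
  proof (cases "x ! j")
    case (Gap m)
    moreover have "x ! j \<in> set x" using len that by simp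
    ultimately show ?thesis using assms unfolding states_def by auto
  qed simp
  show "(\<Sum>j<k. gabs (x ! j)) = n"
    using assms len unfolding states_def by (simp add: sum_list_sum_nth atLeast0LessThan)
  show "blocked x \<le> k - 1" using assms unfolding states_def blocked_def by simp
qed

lemma blocked_eq_card: "length x = k \<Longrightarrow> blocked x = card {j. j < k \<and> x ! j = Star}"
  unfolding blocked_def by (simp add: length_filter_conv_card)

lemma states_intro:
  assumes len: "length x = k" and ge1: "\<And>j. j < k \<Longrightarrow> 1 \<le> gabs (x ! j)"
    and sum: "(\<Sum>j<k. gabs (x ! j)) = n" and "j0 < k" "x ! j0 \<noteq> Star"
  shows "x \<in> states n k"
proof -
  have le: "gabs (x ! j) \<le> n - k + 1" if "j < k" for j
  proof -
    have "k - 1 = (\<Sum>i\<in>{..<k} - {j}. 1::nat)" using that by simp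
    also have "\<dots> \<le> (\<Sum>i\<in>{..<k} - {j}. gabs (x ! i))" using ge1 by (intro sum_mono) auto
    also have "\<dots> = n - gabs (x ! j)" using sum that by (simp add: sum_diff1_nat)
    finally have "k - 1 \<le> n - gabs (x ! j)" .
    moreover have "gabs (x ! j) \<le> n"
      using sum member_le_sum[of j "{..<k}" "\<lambda>i. gabs (x ! i)"] that by simp
    ultimately show ?thesis by linarith
  qed
  have "e = Star \<or> (\<exists>m. e = Gap m \<and> 1 \<le> m \<and> m \<le> n - k + 1)" if "e \<in> set x" for e
  proof -
    obtain j where "j < k" "e = x ! j" using \<open>e \<in> set x\<close> len by (auto simp: in_set_conv_nth)
    then show ?thesis using ge1[of j] le[of j] by (cases "x ! j") auto
  qed
  moreover have "sum_list (map gabs x) = n"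
    using sum len by (simp add: sum_list_sum_nth atLeast0LessThan)
  moreover have "length (filter (\<lambda>e. e = Star) x) < length x"
    using assms(1,4,5) by (intro length_filter_less) auto
  ultimately show ?thesis using len unfolding states_def by simp
qed

lemma finite_states: "finite (states n k)"
proof (rule finite_subset)
  show "states n k \<subseteq> {xs. set xs \<subseteq> insert Star (Gap ` {..n + 1}) \<and> length xs = k}"
    unfolding states_def by auto
  show "finite {xs. set xs \<subseteq> insert Star (Gap ` {..n + 1}) \<and> length xs = k}"
    by (intro finite_lists_length_eq) auto
qed

lemma states_nonempty: "1 \<le> k \<Longrightarrow> k \<le> n \<Longrightarrow> states n k \<noteq> {}"
  using sum_list_replicate[of "k - 1" "1::nat"]
  by (auto simp: states_def intro!: exI[of _ "Gap (n - k + 1) # replicate (k - 1) (Gap 1)"])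

section \<open>Failure counts towards a fixed target state\<close>

locale target_state =
  fixes n k :: nat and y :: "gap list"
  assumes k_pos: "1 \<le> k" and y_state: "y \<in> states n k"
begin

definition c :: "nat \<Rightarrow> nat" where
  "c j = gabs (y ! j)"

definition delta :: "gap list \<Rightarrow> int list" where
  "delta x = map2 (-) (absv y) (absv x)"

definition gmin :: "gap list \<Rightarrow> int" where
  "gmin x = Min {gam (delta x) i | i. 1 \<le> i \<and> i \<le> k}"

definition fails :: "gap list \<Rightarrow> nat \<Rightarrow> nat" where
  "fails x j = nat (gam (delta x) (Suc j) - gmin x)"

lemma c_ge1: "j < k \<Longrightarrow> 1 \<le> c j"
  using states_gabs_ge1[OF y_state] unfolding c_def .

lemma sum_c: "(\<Sum>j<k. c j) = n"
  using states_sum_gabs[OF y_state] unfolding c_def .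

lemma gam_delta:
  assumes "x \<in> states n k" "j \<le> k"
  shows "gam (delta x) j = (\<Sum>i<j. int (c i) - int (gabs (x ! i)))"
proof -
  have "take j (delta x) = map (\<lambda>i. int (c i) - int (gabs (x ! i))) [0..<j]"
    using assms states_length[OF y_state] states_length[OF assms(1)]
    by (auto simp: delta_def absv_def c_def intro: nth_equalityI)
  then show ?thesis by (simp add: gam_def sum_list_sum_nth atLeast0LessThan)
qed

lemma gam_delta_k: "x \<in> states n k \<Longrightarrow> gam (delta x) k = 0"
  using gam_delta[of x k] sum_c states_sum_gabs[of x n k]
  by (simp add: sum_subtractf flip: of_nat_sum)

lemma gam_delta_bounds:
  assumes "x \<in> states n k" "j \<le> k"
  shows "\<bar>gam (delta x) j\<bar> \<le> int n"
proof -
  have "(\<Sum>i<j. c i) \<le> (\<Sum>i<k. c i)" "(\<Sum>i<j. gabs (x ! i)) \<le> (\<Sum>i<k. gabs (x ! i))"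
    using assms(2) by (simp_all add: sum_mono2)
  then have "(\<Sum>i<j. c i) \<le> n" "(\<Sum>i<j. gabs (x ! i)) \<le> n"
    using sum_c states_sum_gabs[OF assms(1)] by simp_all
  then show ?thesis using gam_delta[OF assms] by (simp add: sum_subtractf flip: of_nat_sum)
qed

lemma gmin_eq: "gmin x = Min (gam (delta x) ` {1..k})"
  unfolding gmin_def by (rule arg_cong[where f = Min]) auto

lemma gmin_le: "1 \<le> i \<Longrightarrow> i \<le> k \<Longrightarrow> gmin x \<le> gam (delta x) i"
  unfolding gmin_eq by (intro Min_le) auto

lemma gmin_attained: "\<exists>i\<in>{1..k}. gmin x = gam (delta x) i"
proof -
  have "gmin x \<in> gam (delta x) ` {1..k}" unfolding gmin_eq using k_pos by (intro Min_in) auto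
  then show ?thesis by auto
qed

lemma int_fails: "j < k \<Longrightarrow> int (fails x j) = gam (delta x) (Suc j) - gmin x"
  unfolding fails_def using gmin_le[of "Suc j" x] by simp

lemma fails_zero: "\<exists>j<k. fails x j = 0"
proof -
  obtain i where "i \<in> {1..k}" "gmin x = gam (delta x) i" using gmin_attained by blast
  then have "i - 1 < k" "fails x (i - 1) = 0" unfolding fails_def by auto
  then show ?thesis by blast
qed

lemma fails_le:
  assumes "x \<in> states n k" "j < k"
  shows "fails x j \<le> 2 * n"
proof -
  obtain i where "i \<in> {1..k}" "gmin x = gam (delta x) i" using gmin_attained by blast
  then have "- int n \<le> gmin x" using gam_delta_bounds[OF assms(1), of i] by simp
  moreover have "gam (delta x) (Suc j) \<le> int n"
    using gam_delta_bounds[OF assms(1), of "Suc j"] assms(2) by simp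
  ultimately show ?thesis using int_fails[OF assms(2), of x] by simp
qed

lemma fails_diff:
  assumes "x \<in> states n k" "j < k"
  shows "int (fails x j) - int (fails x (cyc_pred k j)) = int (c j) - int (gabs (x ! j))"
proof (cases "j = 0")
  case True
  then show ?thesis
    using assms int_fails[of 0 x] int_fails[of "k - 1" x] gam_delta_k[OF assms(1)]
      gam_delta[OF assms(1), of 1]
    by (simp add: cyc_pred_def)
next
  case False
  then show ?thesis
    using assms int_fails[of j x] int_fails[of "j - 1" x]
      gam_delta[OF assms(1), of "Suc j"] gam_delta[OF assms(1), of j]
    by (simp add: cyc_pred_def)
qed

lemma phi_delta: "x \<in> states n k \<Longrightarrow> phi (delta x) = int (\<Sum>j<k. fails x j)"
proof -
  assume "x \<in> states n k"
  then have "length (delta x) = k"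
    using states_length[OF y_state] states_length by (simp add: delta_def absv_def)
  then have "phi (delta x) = (\<Sum>i = 1..k. gam (delta x) i - gmin x)"
    by (simp add: phi_def gmin_def)
  also have "\<dots> = (\<Sum>j<k. gam (delta x) (Suc j) - gmin x)"
    by (simp add: sum.atLeast1_atMost_eq)
  finally show ?thesis by (simp add: int_fails)
qed

text \<open>Any truncation level above the largest failure count \<open>2 n\<close> (see \<open>fails_le\<close>) would do.\<close>
definition N :: nat where
  "N = 2 * n + 1"

text \<open>\<open>G j\<close> is the failure count of worker \<open>j\<close>: exactly \<open>fails x j\<close> if the worker stops at a
  success, more if it is blocked first.\<close>
definition outcomes :: "gap list \<Rightarrow> (nat \<Rightarrow> nat) set" where
  "outcomes x = PiE {..<k} (\<lambda>j. if x ! j = Star then {Suc (fails x j)..N} else {fails x j})"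

lemma fails_less_N: "x \<in> states n k \<Longrightarrow> j < k \<Longrightarrow> fails x j < N"
  using fails_le[of x j] unfolding N_def by simp

lemma outcomesD:
  assumes "x \<in> states n k" "G \<in> outcomes x" "j < k"
  shows "fails x j \<le> G j" "G j \<le> N" "x ! j = Star \<longleftrightarrow> fails x j < G j"
proof -
  have "G j \<in> (if x ! j = Star then {Suc (fails x j)..N} else {fails x j})"
    using assms(2) unfolding outcomes_def by (rule PiE_mem) (use assms(3) in simp)
  then show "fails x j \<le> G j" "G j \<le> N" "x ! j = Star \<longleftrightarrow> fails x j < G j"
    using fails_less_N[OF assms(1,3)] by (auto split: if_splits)
qed

lemma cyclic_min_eq_fails:
  assumes xS: "x \<in> states n k" and G: "G \<in> outcomes x"
  shows "cyclic_min_eq k (\<lambda>j. c j - 1) G (fails x)"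
  unfolding cyclic_min_eq_def
proof (intro allI impI)
  fix j assume "j < k"
  have diff: "int (fails x j) - int (fails x (cyc_pred k j)) = int (c j) - int (gabs (x ! j))"
    using fails_diff[OF xS \<open>j < k\<close>] .
  have "1 \<le> c j" "1 \<le> gabs (x ! j)" using c_ge1 states_gabs_ge1[OF xS] \<open>j < k\<close> by auto
  show "fails x j = min (G j) (fails x (cyc_pred k j) + (c j - 1))"
  proof (cases "x ! j = Star")
    case True
    then show ?thesis using diff \<open>1 \<le> c j\<close> outcomesD(3)[OF xS G \<open>j < k\<close>] by simp
  next
    case False
    then have "G j = fails x j" using outcomesD[OF xS G \<open>j < k\<close>] by simp
    then show ?thesis using diff \<open>1 \<le> c j\<close> \<open>1 \<le> gabs (x ! j)\<close> by simp
  qed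
qed

text \<open>If no worker succeeded at once, the zero of \<open>fails x\<close> would spread to every worker,
  so all of them would be blocked.\<close>
lemma outcomes_subset: "x \<in> states n k \<Longrightarrow> outcomes x \<subseteq> some_zero_vectors k N"
proof
  fix G assume xS: "x \<in> states n k" and G: "G \<in> outcomes x"
  have "\<exists>j<k. G j = 0"
  proof (rule ccontr)
    assume "\<not> (\<exists>j<k. G j = 0)"
    then have G_pos: "0 < G j" if "j < k" for j using that by simp
    obtain j1 where "j1 < k" "fails x j1 = 0" using fails_zero by blast
    then have "fails x j = 0" if "j < k" for j
      using cyc_pred_closed_imp_all[of k "{j. fails x j = 0}" j1 j] that
        cyclic_min_eq_zero_propagates[OF cyclic_min_eq_fails[OF xS G] _ G_pos] by blast
    then have "{j. j < k \<and> x ! j = Star} = {..<k}"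
      using outcomesD(3)[OF xS G] G_pos by auto
    then have "blocked x = k" using blocked_eq_card[OF states_length[OF xS]] by simp
    then show False using states_blocked_le[OF xS] k_pos by simp
  qed
  moreover have "G \<in> {..<k} \<rightarrow>\<^sub>E {0..N}"
    using G outcomesD(2)[OF xS G] unfolding outcomes_def by (auto simp: PiE_iff)
  ultimately show "G \<in> some_zero_vectors k N" unfolding some_zero_vectors_def by simp
qed

lemma outcomes_disjoint:
  assumes xS: "x \<in> states n k" and xS': "x' \<in> states n k"
    and G: "G \<in> outcomes x" and G': "G \<in> outcomes x'"
  shows "x = x'"
proof (rule nth_equalityI)
  show "length x = length x'" using states_length[OF xS] states_length[OF xS'] by simp
  obtain j0 where "j0 < k" "G j0 = 0"
    using outcomes_subset[OF xS] G unfolding some_zero_vectors_def by blast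
  then have fails_eq: "fails x j = fails x' j" if "j < k" for j
    using cyclic_min_eq_unique[OF cyclic_min_eq_fails[OF xS G] cyclic_min_eq_fails[OF xS' G']] that
    by blast
  fix j assume "j < length x"
  then have "j < k" using states_length[OF xS] by simp
  have "x ! j = Star \<longleftrightarrow> x' ! j = Star"
    using outcomesD(3)[OF xS G \<open>j < k\<close>] outcomesD(3)[OF xS' G' \<open>j < k\<close>] fails_eq[OF \<open>j < k\<close>] by simp
  moreover have "gabs (x ! j) = gabs (x' ! j)"
    using fails_diff[OF xS \<open>j < k\<close>] fails_diff[OF xS' \<open>j < k\<close>]
      fails_eq[OF \<open>j < k\<close>] fails_eq[OF cyc_pred_less[OF \<open>j < k\<close>]] by simp
  ultimately show "x ! j = x' ! j" by (cases "x ! j"; cases "x' ! j") auto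
qed

text \<open>Inverse of \<open>fails\<close>: a worker whose failure count \<open>m j\<close> stays below \<open>G j\<close> was blocked,
  and the gaps of the others are read off the difference equation of \<open>fails_diff\<close>.\<close>
definition decode :: "(nat \<Rightarrow> nat) \<Rightarrow> (nat \<Rightarrow> nat) \<Rightarrow> gap list" where
  "decode G m = map (\<lambda>j. if m j < G j then Star else Gap (c j + m (cyc_pred k j) - m j)) [0..<k]"

lemma gabs_decode:
  assumes m: "cyclic_min_eq k (\<lambda>j. c j - 1) G m" and "j < k"
  shows "int (gabs (decode G m ! j)) = int (c j) + int (m (cyc_pred k j)) - int (m j)"
    and "1 \<le> gabs (decode G m ! j)"
proof -
  have "m j = min (G j) (m (cyc_pred k j) + (c j - 1))" "1 \<le> c j"
    using cyclic_min_eqD[OF m \<open>j < k\<close>] c_ge1[OF \<open>j < k\<close>] by simp_all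
  then show "int (gabs (decode G m ! j)) = int (c j) + int (m (cyc_pred k j)) - int (m j)"
    and "1 \<le> gabs (decode G m ! j)"
    using \<open>j < k\<close> unfolding decode_def by auto
qed

lemma decode_in_states:
  assumes m: "cyclic_min_eq k (\<lambda>j. c j - 1) G m" and "j0 < k" "G j0 = 0"
  shows "decode G m \<in> states n k"
proof (rule states_intro)
  show "length (decode G m) = k" by (simp add: decode_def)
  show "1 \<le> gabs (decode G m ! j)" if "j < k" for j using gabs_decode(2)[OF m that] .
  have "int (\<Sum>j<k. gabs (decode G m ! j)) = (\<Sum>j<k. int (c j) + int (m (cyc_pred k j)) - int (m j))"
    using gabs_decode(1)[OF m] by simp
  also have "\<dots> = int n"
    using sum_cyc_pred[of "\<lambda>j. int (m j)" k] sum_c by (simp add: sum.distrib sum_subtractf flip: of_nat_sum)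
  finally show "(\<Sum>j<k. gabs (decode G m ! j)) = n" by (simp only: of_nat_eq_iff)
  show "j0 < k" by fact
  show "decode G m ! j0 \<noteq> Star"
    using cyclic_min_eqD[OF m \<open>j0 < k\<close>] \<open>j0 < k\<close> \<open>G j0 = 0\<close> by (simp add: decode_def)
qed

lemma fails_decode:
  assumes m: "cyclic_min_eq k (\<lambda>j. c j - 1) G m" and "j0 < k" "G j0 = 0" "j < k"
  shows "fails (decode G m) j = m j"
proof -
  define x where "x = decode G m"
  have xS: "x \<in> states n k" unfolding x_def using decode_in_states[OF m assms(2,3)] .
  define h where "h j = int (m j) - int (fails x j)" for j
  have "h (cyc_pred k j) = h j" if "j < k" for j
    using fails_diff[OF xS that] gabs_decode(1)[OF m that] unfolding h_def x_def by simp
  then have h_const: "h i = h j0" if "i < k" for i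
    using cyc_pred_invariant_const that \<open>j0 < k\<close> by blast
  obtain j1 where "j1 < k" "fails x j1 = 0" using fails_zero by blast
  then have "0 \<le> h j0" using h_const[of j1] unfolding h_def by simp
  moreover have "h j0 \<le> 0" using cyclic_min_eqD[OF m \<open>j0 < k\<close>] \<open>G j0 = 0\<close> unfolding h_def by simp
  ultimately show ?thesis using h_const[OF \<open>j < k\<close>] unfolding h_def x_def by simp
qed

lemma some_zero_vectors_eq_Union_outcomes:
  "some_zero_vectors k N = (\<Union>x\<in>states n k. outcomes x)"
proof (intro equalityI subsetI)
  fix G assume G: "G \<in> some_zero_vectors k N"
  then obtain j0 where "j0 < k" "G j0 = 0" unfolding some_zero_vectors_def by blast
  obtain m where m: "cyclic_min_eq k (\<lambda>j. c j - 1) G m" using cyclic_min_eq_exists by blast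
  have "G j \<in> (if decode G m ! j = Star then {Suc (fails (decode G m) j)..N} else {fails (decode G m) j})"
    if "j < k" for j
    using G cyclic_min_eqD[OF m that] fails_decode[OF m \<open>j0 < k\<close> \<open>G j0 = 0\<close> that] that
    by (auto simp: decode_def some_zero_vectors_def PiE_iff)
  then have "G \<in> outcomes (decode G m)"
    using G unfolding outcomes_def some_zero_vectors_def by (auto simp: PiE_iff)
  then show "G \<in> (\<Union>x\<in>states n k. outcomes x)"
    using decode_in_states[OF m \<open>j0 < k\<close> \<open>G j0 = 0\<close>] by blast
qed (use outcomes_subset in blast)

lemma sum_prod_outcomes:
  fixes s :: real
  assumes "s \<noteq> 0" and xS: "x \<in> states n k"
  shows "(\<Sum>G\<in>outcomes x. \<Prod>j<k. trunc_geom s N (G j))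
    = s ^ k * ((1 - s) / s) ^ blocked x * (1 - s) ^ (\<Sum>j<k. fails x j)"
proof -
  let ?r = "(1 - s) / s"
  have "(\<Sum>G\<in>outcomes x. \<Prod>j<k. trunc_geom s N (G j))
      = (\<Prod>j<k. \<Sum>g\<in>(if x ! j = Star then {Suc (fails x j)..N} else {fails x j}). trunc_geom s N g)"
    unfolding outcomes_def by (rule prod_sum_PiE[symmetric]) auto
  also have "\<dots> = (\<Prod>j<k. s * (if x ! j = Star then ?r else 1) * (1 - s) ^ fails x j)"
  proof (rule prod.cong)
    fix j assume "j \<in> {..<k}"
    then have "fails x j < N" using fails_less_N[OF xS] by simp
    then show "(\<Sum>g\<in>(if x ! j = Star then {Suc (fails x j)..N} else {fails x j}). trunc_geom s N g)
        = s * (if x ! j = Star then ?r else 1) * (1 - s) ^ fails x j"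
      using sum_trunc_geom_tail[of "Suc (fails x j)" N s] \<open>s \<noteq> 0\<close> by (simp add: trunc_geom_def)
  qed simp
  also have "\<dots> = s ^ k * (\<Prod>j<k. if x ! j = Star then ?r else 1) * (1 - s) ^ (\<Sum>j<k. fails x j)"
    by (simp add: prod.distrib power_sum)
  also have "(\<Prod>j<k. if x ! j = Star then ?r else 1) = ?r ^ blocked x"
    using prod.inter_filter[of "{..<k}" "\<lambda>_. ?r" "\<lambda>j. x ! j = Star", symmetric]
    by (simp add: blocked_eq_card[OF states_length[OF xS]])
  finally show ?thesis .
qed

lemma weighted_phi_sum:
  fixes s :: real
  assumes "s \<noteq> 0"
  shows "s ^ k * (\<Sum>x\<in>states n k. weight s x * (1 - s) ^ nat (phi (delta x))) = 1 - (1 - s) ^ k"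
proof -
  have "s ^ k * (\<Sum>x\<in>states n k. weight s x * (1 - s) ^ nat (phi (delta x)))
      = (\<Sum>x\<in>states n k. \<Sum>G\<in>outcomes x. \<Prod>j<k. trunc_geom s N (G j))"
    unfolding sum_distrib_left
  proof (rule sum.cong)
    fix x assume xS: "x \<in> states n k"
    have "nat (phi (delta x)) = (\<Sum>j<k. fails x j)" using phi_delta[OF xS] by (simp only: nat_int)
    then show "s ^ k * (weight s x * (1 - s) ^ nat (phi (delta x)))
        = (\<Sum>G\<in>outcomes x. \<Prod>j<k. trunc_geom s N (G j))"
      using sum_prod_outcomes[OF assms xS] by (simp add: weight_def)
  qed simp
  also have "\<dots> = (\<Sum>G\<in>(\<Union>x\<in>states n k. outcomes x). \<Prod>j<k. trunc_geom s N (G j))"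
    using outcomes_disjoint by (intro sum.UNION_disjoint[symmetric] finite_states ballI)
      (auto simp: outcomes_def intro!: finite_PiE)
  also have "\<dots> = 1 - (1 - s) ^ k"
    by (simp add: some_zero_vectors_eq_Union_outcomes[symmetric] N_def sum_trunc_geom_some_zero_vectors)
  finally show ?thesis .
qed

end

lemma weight_stationary:
  fixes s :: real
  assumes "1 \<le> k" "0 < s" "s < 1" and yS: "y \<in> states n k"
  shows "(\<Sum>x\<in>states n k. weight s x * trans_prob k s x y) = weight s y"
proof -
  interpret target_state n k y using assms by unfold_locales
  have "(1 - s) ^ k < 1" using assms by (simp add: power_less_one_iff)
  have "(\<Sum>x\<in>states n k. weight s x * trans_prob k s x y)
      = weight s y / (1 - (1 - s) ^ k)
        * (s ^ k * (\<Sum>x\<in>states n k. weight s x * (1 - s) ^ nat (phi (delta x))))"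
    unfolding trans_prob_def weight_def[of s y, symmetric] delta_def sum_distrib_left
    by (intro sum.cong) (simp_all add: field_simps)
  also have "\<dots> = weight s y"
    using weighted_phi_sum \<open>0 < s\<close> \<open>(1 - s) ^ k < 1\<close> by simp
  finally show ?thesis .
qed

theorem mainTheorem1:
  fixes n k :: nat and s :: real
  assumes "1 \<le> k" and "k \<le> n" and "0 < s" and "s < 1"
  shows "(\<forall>y \<in> states n k. nu n k s y = (\<Sum>x \<in> states n k. nu n k s x * trans_prob k s x y))
    \<and> (\<forall>\<mu> :: gap list \<Rightarrow> real.
          (\<forall>x \<in> states n k. 0 \<le> \<mu> x) \<and> (\<Sum>x \<in> states n k. \<mu> x) = 1
          \<and> (\<forall>y \<in> states n k. \<mu> y = (\<Sum>x \<in> states n k. \<mu> x * trans_prob k s x y))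
          \<longrightarrow> (\<forall>x \<in> states n k. \<mu> x = nu n k s x))"
proof -
  let ?S = "states n k" and ?Z = "\<Sum>z\<in>states n k. weight s z"
  have weight_pos: "0 < weight s x" for x
    using assms by (simp add: weight_def)
  then have "0 < ?Z" using finite_states states_nonempty[OF assms(1,2)] by (simp add: sum_pos)
  then have nu_pos: "0 < nu n k s x" and nu_sum: "(\<Sum>x\<in>?S. nu n k s x) = 1" for x
    using weight_pos by (simp_all add: nu_def sum_divide_distrib[symmetric])
  have nu_stationary: "nu n k s y = (\<Sum>x\<in>?S. nu n k s x * trans_prob k s x y)" if "y \<in> ?S" for y
    using weight_stationary[OF assms(1,3,4) that]
    by (simp add: nu_def sum_divide_distrib[symmetric])
  have "0 < trans_prob k s x y" for x y
    using assms weight_pos by (simp add: trans_prob_def weight_def[symmetric] power_less_one_iff)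
  then show ?thesis
    using nu_stationary stationary_unique_of_positive_kernel[OF finite_states _ nu_pos nu_sum nu_stationary]
    by blast
qed

end
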